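(* Let $g(x)=\sum_{k=0}^\infty a_k x^k$ be a real power series convergent for $x\in(-\varrho,\varrho)$, some $\varrho\in(0,\infty)$, and put $G(y)=g(1/y)$. Then for every real $y>1+\max\{1,1/\varrho\}$, $$(y+1)G(y)-yG(y-1)=a_0-\sum_{k=2}^\infty \frac{\sum_{i=1}^{k-1}\binom{k}{i-1}a_i+\bigl(\binom{k}{k-1}-1\bigr)a_k}{y^k},$$ the series being convergent. Consequently $\lim_{y\to\infty}\bigl((y+1)G(y)-yG(y-1)\bigr)=a_0$. In particular, $\lim_{y\to\infty}\Bigl(\frac{(y+1)^{y+1}}{y^y}-\frac{y^y}{(y-1)^{y-1}}\Bigr)=\mathrm{e}$.
   Context: $\mathrm{e}$ is the base of the natural logarithm; the special case corresponds to $g(x)=(1+x)^{1/x}$ (with value $\mathrm{e}$ at $0$), whose Maclaurin series converges on $(-1,1)$ and has constant term $\mathrm{e}$, so that $G(y)=(1+1/y)^y$. *)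

theory Defs
  imports "HOL-Analysis.Analysis"
begin

definition pser :: "(nat \<Rightarrow> real) \<Rightarrow> real \<Rightarrow> real" where
  "pser a x = (\<Sum>k. a k * x ^ k)"

definition Gfun :: "(nat \<Rightarrow> real) \<Rightarrow> real \<Rightarrow> real" where
  "Gfun a y = pser a (1 / y)"

definition coefc :: "(nat \<Rightarrow> real) \<Rightarrow> nat \<Rightarrow> real" where
  "coefc a k = (\<Sum>i=1..k-1. real (k choose (i - 1)) * a i) + (real (k choose (k - 1)) - 1) * a k"

end

theory Submission
  imports Defs "HOL-Real_Asymp.Real_Asymp"
begin

text \<open>With \<open>x = 1/y\<close> one has \<open>1/(y-1) = x/(1-x)\<close>, so \<open>G(y-1) = g(x/(1-x))\<close>. Expanding each
\<open>(x/(1-x))^(k+1)\<close> as a negative binomial series and summing the resulting absolutely convergent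
double series along diagonals gives Euler's transform
\<open>g(x/(1-x)) = a\<^sub>0 + \<Sum>\<^sub>n (\<Sum>\<^sub>k<n (n-1 choose k) a\<^sub>k\<^sub>+\<^sub>1) x\<^sup>n\<close>. Comparing coefficients of
\<open>(y+1) g(x) - y g(x/(1-x))\<close> then yields the identity, whose right-hand side is \<open>a\<^sub>0\<close> minus \<open>x\<^sup>2\<close>
times a power series in \<open>x\<close>; continuity of that power series at \<open>0\<close> gives the limit.\<close>

lemma sums_binomial_neg_power:
  fixes x :: real
  assumes "\<bar>x\<bar> < 1"
  shows "(\<lambda>j. real ((k + j) choose k) * x ^ j) sums ((1 / (1 - x)) ^ Suc k)"
proof -
  have "(\<lambda>n. ((- (real k + 1)) gchoose n) * (- x) ^ n) sums (1 + - x) powr (- (real k + 1))"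
    by (rule gen_binomial_real) (use assms in auto)
  moreover have "((- (real k + 1)) gchoose n) * (- x) ^ n = real ((k + n) choose k) * x ^ n" for n
  proof -
    have "((- (real k + 1)) gchoose n) = (-1) ^ n * (of_nat (k + n) gchoose n)"
      by (subst gbinomial_minus) (simp add: algebra_simps)
    also have "\<dots> = (-1) ^ n * real ((k + n) choose k)"
      by (metis binomial_gbinomial binomial_symmetric le_add2 add_diff_cancel_right')
    finally have "((- (real k + 1)) gchoose n) * (- x) ^ n
        = ((-1) ^ n * (-1) ^ n) * (real ((k + n) choose k) * x ^ n)"
      by (simp only: power_minus[of x] mult_ac)
    then show ?thesis
      by (simp flip: power_mult_distrib)
  qed
  moreover have "(1 + - x) powr (- (real k + 1)) = (1 / (1 - x)) ^ Suc k"
  proof -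
    have "(1 - x) powr (- (real k + 1)) = inverse ((1 - x) powr real (Suc k))"
      by (subst powr_minus[symmetric]) (simp add: algebra_simps)
    also have "\<dots> = inverse ((1 - x) ^ Suc k)"
      using assms by (subst powr_realpow) auto
    also have "\<dots> = (1 / (1 - x)) ^ Suc k"
      by (simp only: power_one_over inverse_eq_divide)
    finally show ?thesis by simp
  qed
  ultimately show ?thesis by simp
qed

lemma has_sum_binomial_row:
  fixes x c :: real
  assumes "0 \<le> x" "x < 1"
  shows "((\<lambda>j. c * (real ((k + j) choose k) * x ^ (Suc k + j))) has_sum c * (x / (1 - x)) ^ Suc k) UNIV"
proof -
  have "((\<lambda>j. real ((k + j) choose k) * x ^ j) has_sum (1 / (1 - x)) ^ Suc k) UNIV"
    by (rule sums_nonneg_imp_has_sum[OF sums_binomial_neg_power]) (use assms in auto)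
  then have "((\<lambda>j. (c * x ^ Suc k) * (real ((k + j) choose k) * x ^ j)) has_sum
               (c * x ^ Suc k) * (1 / (1 - x)) ^ Suc k) UNIV"
    by (rule has_sum_cmult_right)
  then show ?thesis
    by (simp add: power_add power_divide mult_ac)
qed

definition euler_coeff :: "(nat \<Rightarrow> real) \<Rightarrow> nat \<Rightarrow> real" where
  "euler_coeff a n = (\<Sum>k<n. real ((n - 1) choose k) * a (Suc k))"

lemma sums_euler_transform:
  fixes a :: "nat \<Rightarrow> real" and x :: real
  assumes x: "0 \<le> x" "x < 1"
    and abs_summable: "summable (\<lambda>k. \<bar>a k\<bar> * (x / (1 - x)) ^ k)"
  shows "(\<lambda>n. euler_coeff a n * x ^ n) sums ((\<Sum>k. a k * (x / (1 - x)) ^ k) - a 0)"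
proof -
  define t where "t = x / (1 - x)"
  have t: "t \<ge> 0" using x by (simp add: t_def)
  define F where "F = (\<lambda>(k, j). a (Suc k) * (real ((k + j) choose k) * x ^ (Suc k + j)))"
  have rows: "((\<lambda>j. F (k, j)) has_sum a (Suc k) * t ^ Suc k) UNIV" for k
    unfolding F_def t_def using has_sum_binomial_row[OF x] by simp
  have abs_rows: "((\<lambda>j. norm (F (k, j))) has_sum \<bar>a (Suc k)\<bar> * t ^ Suc k) UNIV" for k
    using has_sum_binomial_row[OF x, of "\<bar>a (Suc k)\<bar>" k] x
    by (simp add: F_def t_def abs_mult)
  have "summable (\<lambda>k. \<bar>a (Suc k)\<bar> * t ^ Suc k)"
    using abs_summable by (subst summable_Suc_iff) (simp add: t_def)
  then have "(\<lambda>k. \<bar>a (Suc k)\<bar> * t ^ Suc k) summable_on UNIV"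
    by (rule summable_nonneg_imp_summable_on) (use t in auto)
  moreover have "infsum (\<lambda>j. norm (F (k, j))) UNIV = \<bar>a (Suc k)\<bar> * t ^ Suc k" for k
    using abs_rows by (rule infsumI)
  ultimately have "(\<lambda>p. norm (F p)) summable_on UNIV \<times> UNIV"
    using abs_rows t
    by (intro Infinite_Sum.abs_summable_on_Sigma_iff[THEN iffD2] conjI ballI)
       (auto simp: summable_on_def abs_mult)
  then obtain S where S: "(F has_sum S) (UNIV \<times> UNIV)"
    using abs_summable_summable summable_on_def by blast
  have "((\<lambda>k. a (Suc k) * t ^ Suc k) has_sum S) UNIV"
    by (rule has_sum_Sigma'[OF S rows])
  moreover have "((\<lambda>k. a (Suc k) * t ^ Suc k) has_sum ((\<Sum>k. a k * t ^ k) - a 0)) UNIV"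
  proof (rule norm_summable_imp_has_sum)
    show "summable (\<lambda>k. norm (a (Suc k) * t ^ Suc k))"
      using abs_summable t by (subst summable_Suc_iff) (simp add: t_def abs_mult)
    then have "summable (\<lambda>k. a k * t ^ k)"
      by (subst (asm) summable_Suc_iff) (rule summable_norm_cancel)
    then show "(\<lambda>k. a (Suc k) * t ^ Suc k) sums ((\<Sum>k. a k * t ^ k) - a 0)"
      by (subst sums_Suc_iff) (simp add: summable_sums)
  qed
  ultimately have S_eq: "S = (\<Sum>k. a k * t ^ k) - a 0"
    by (rule has_sum_unique)
  text \<open>Summing along the diagonals \<open>n = k + j + 1\<close> collects the coefficient of \<open>x\<^sup>n\<close>.\<close>
  define F' where "F' = (\<lambda>(n, k). a (Suc k) * real ((n - 1) choose k) * x ^ n)"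
  have "(F has_sum S) (UNIV \<times> UNIV) = (F' has_sum S) (SIGMA n:UNIV. {..<n})"
    by (rule has_sum_reindex_bij_witness[where i = "\<lambda>(n, k). (k, n - 1 - k)"
          and j = "\<lambda>(k, j). (k + j + 1, k)"]) (auto simp: F_def F'_def)
  with S have "(F' has_sum S) (SIGMA n:UNIV. {..<n})" by simp
  moreover have "((\<lambda>k. F' (n, k)) has_sum euler_coeff a n * x ^ n) {..<n}" for n
    by (rule has_sum_finiteI) (auto simp: F'_def euler_coeff_def sum_distrib_left mult_ac)
  ultimately have "((\<lambda>n. euler_coeff a n * x ^ n) has_sum S) UNIV"
    by (rule has_sum_Sigma')
  then show ?thesis
    unfolding S_eq t_def by (rule has_sum_imp_sums)
qed

lemma coefc_eq_euler_coeff: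
  assumes "n \<ge> 1"
  shows "coefc a n = euler_coeff a (Suc n) - a (Suc n) - a n"
proof -
  obtain m where m: "n = Suc m" using assms by (cases n) auto
  have "(\<Sum>i=1..m. real (Suc m choose (i - 1)) * a i) = (\<Sum>k<m. real (Suc m choose k) * a (Suc k))"
    by (simp add: sum.atLeast1_atMost_eq)
  moreover have "euler_coeff a (Suc (Suc m)) = (\<Sum>k<m. real (Suc m choose k) * a (Suc k))
      + real (Suc m choose m) * a (Suc m) + a (Suc (Suc m))"
    by (simp add: euler_coeff_def)
  ultimately show ?thesis by (simp add: m coefc_def algebra_simps)
qed

lemma summable_abs_powser_inside:
  fixes a :: "nat \<Rightarrow> real"
  assumes "\<And>x. \<bar>x\<bar> < \<rho> \<Longrightarrow> summable (\<lambda>k. a k * x ^ k)" and "\<bar>t\<bar> < \<rho>"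
  shows "summable (\<lambda>k. \<bar>a k\<bar> * \<bar>t\<bar> ^ k)"
proof -
  have "summable (\<lambda>k. a k * ((\<bar>t\<bar> + \<rho>) / 2) ^ k)"
    using assms by (intro assms(1)) auto
  then have "summable (\<lambda>k. norm (a k * t ^ k))"
    by (rule powser_insidea) (use assms(2) in auto)
  then show ?thesis by (simp add: abs_mult power_abs)
qed

lemma sums_coefc_Gfun:
  fixes a :: "nat \<Rightarrow> real" and y :: real
  assumes y: "y > 2" and abs_summable: "summable (\<lambda>k. \<bar>a k\<bar> * (1 / (y - 1)) ^ k)"
  shows "(\<lambda>m. coefc a (m + 2) / y ^ (m + 2)) sums (a 0 - ((y + 1) * Gfun a y - y * Gfun a (y - 1)))"
proof -
  define x where "x = 1 / y"
  have x: "0 \<le> x" "x < 1" "x \<le> 1 / (y - 1)" and yx: "y * x = 1"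
    using y by (auto simp: x_def field_simps)
  have "x / (1 - x) = 1 / (y - 1)" using y by (simp add: x_def field_simps)
  then have "(\<lambda>n. euler_coeff a n * x ^ n) sums (Gfun a (y - 1) - a 0)"
    using sums_euler_transform[OF x(1,2)] abs_summable by (simp add: Gfun_def pser_def)
  then have euler: "(\<lambda>n. euler_coeff a (Suc n) * x ^ Suc n) sums (Gfun a (y - 1) - a 0)"
    by (subst sums_Suc_iff) (simp add: euler_coeff_def)
  have "summable (\<lambda>k. a k * x ^ k)"
  proof (rule summable_comparison_test[OF _ abs_summable])
    show "\<exists>N. \<forall>k\<ge>N. norm (a k * x ^ k) \<le> \<bar>a k\<bar> * (1 / (y - 1)) ^ k"
      using x by (auto simp: abs_mult intro!: mult_left_mono power_mono)
  qed
  then have g: "(\<lambda>k. a k * x ^ k) sums Gfun a y"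
    by (simp add: Gfun_def pser_def x_def summable_sums)
  then have g_Suc: "(\<lambda>k. a (Suc k) * x ^ Suc k) sums (Gfun a y - a 0)"
    by (subst sums_Suc_iff) simp
  define u where "u n = y * (euler_coeff a (Suc n) * x ^ Suc n) - y * (a (Suc n) * x ^ Suc n) - a n * x ^ n" for n
  have "u sums (y * (Gfun a (y - 1) - a 0) - y * (Gfun a y - a 0) - Gfun a y)"
    unfolding u_def by (intro sums_diff sums_mult euler g g_Suc)
  then have "(\<lambda>m. u (m + 2)) sums (y * (Gfun a (y - 1) - a 0) - y * (Gfun a y - a 0) - Gfun a y - (\<Sum>i<2. u i))"
    by (rule sums_split_initial_segment)
  moreover have "(\<Sum>i<2. u i) = - a 0"
    using yx by (simp add: u_def euler_coeff_def eval_nat_numeral algebra_simps power2_eq_square)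
  moreover have "u (m + 2) = coefc a (m + 2) / y ^ (m + 2)" for m
  proof -
    have "u (m + 2) = (euler_coeff a (Suc (m + 2)) - a (Suc (m + 2))) * (y * x ^ Suc (m + 2))
        - a (m + 2) * x ^ (m + 2)"
      by (simp add: u_def algebra_simps)
    also have "y * x ^ Suc (m + 2) = x ^ (m + 2)"
      using yx by (simp add: mult.assoc[symmetric])
    also have "(euler_coeff a (Suc (m + 2)) - a (Suc (m + 2))) * x ^ (m + 2) - a (m + 2) * x ^ (m + 2)
        = coefc a (m + 2) * x ^ (m + 2)"
      by (simp add: coefc_eq_euler_coeff algebra_simps)
    finally show ?thesis
      by (simp add: x_def power_one_over)
  qed
  ultimately show ?thesis by (simp add: algebra_simps)
qed

lemma tendsto_at_top_if_sums_inverse_powers: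
  fixes f :: "real \<Rightarrow> real" and c :: "nat \<Rightarrow> real"
  assumes sums: "\<And>y. y > y\<^sub>0 \<Longrightarrow> (\<lambda>m. c m / y ^ (m + 2)) sums (L - f y)"
  shows "(f \<longlongrightarrow> L) at_top"
proof -
  define y\<^sub>1 where "y\<^sub>1 = max y\<^sub>0 0 + 1"
  have y\<^sub>1: "y\<^sub>1 > y\<^sub>0" "y\<^sub>1 > 0" by (auto simp: y\<^sub>1_def)
  have powser: "(\<lambda>m. c m * inverse y ^ m) sums (y\<^sup>2 * (L - f y))" if "y > y\<^sub>0" "y > 0" for y
  proof -
    have "(\<lambda>m. y\<^sup>2 * (c m / y ^ (m + 2))) sums (y\<^sup>2 * (L - f y))"
      using sums[OF that(1)] by (rule sums_mult)
    moreover have "y\<^sup>2 * (c m / y ^ (m + 2)) = c m * inverse y ^ m" for m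
      using that(2) by (simp add: power_add power_inverse power2_eq_square field_simps)
    ultimately show ?thesis by simp
  qed
  define h where "h x = (\<Sum>m. c m * x ^ m)" for x :: real
  have "isCont h 0"
    unfolding h_def using powser[OF y\<^sub>1] y\<^sub>1(2)
    by (intro isCont_powser[of _ "inverse y\<^sub>1"]) (auto dest: sums_summable)
  then have "((\<lambda>y. h (inverse y)) \<longlongrightarrow> h 0) at_top"
    by (rule isCont_tendsto_compose) (rule tendsto_inverse_0_at_top[OF filterlim_ident])
  then have "((\<lambda>y. L - inverse y ^ 2 * h (inverse y)) \<longlongrightarrow> L - 0 ^ 2 * h 0) at_top"
    by (intro tendsto_intros tendsto_inverse_0_at_top[OF filterlim_ident])
  moreover have "eventually (\<lambda>y. L - inverse y ^ 2 * h (inverse y) = f y) at_top"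
    using eventually_gt_at_top[of y\<^sub>1]
  proof eventually_elim
    case (elim y)
    then have "h (inverse y) = y\<^sup>2 * (L - f y)"
      using powser[of y] y\<^sub>1 unfolding h_def by (simp add: sums_iff)
    then show ?case using elim y\<^sub>1 by (simp add: power_inverse field_simps)
  qed
  ultimately show ?thesis by (simp add: tendsto_cong)
qed

lemma tendsto_powr_self_difference:
  "((\<lambda>y::real. (y + 1) powr (y + 1) / y powr y - y powr y / (y - 1) powr (y - 1)) \<longlongrightarrow> exp 1) at_top"
proof -
  have "((\<lambda>y::real. exp ((y + 1) * ln (y + 1) - y * ln y) - exp (y * ln y - (y - 1) * ln (y - 1)))
      \<longlongrightarrow> exp 1) at_top"
    by real_asymp
  moreover have "eventually (\<lambda>y::real. exp ((y + 1) * ln (y + 1) - y * ln y) - exp (y * ln y - (y - 1) * ln (y - 1))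
      = (y + 1) powr (y + 1) / y powr y - y powr y / (y - 1) powr (y - 1)) at_top"
    using eventually_gt_at_top[of "1::real"] by eventually_elim (simp add: powr_def exp_diff)
  ultimately show ?thesis by (simp add: tendsto_cong)
qed

theorem mainTheorem4:
  fixes a :: "nat \<Rightarrow> real" and \<rho> :: real
  assumes rho_pos: "\<rho> > 0"
    and conv: "\<And>x. \<bar>x\<bar> < \<rho> \<Longrightarrow> summable (\<lambda>k. a k * x ^ k)"
  shows "(\<forall>y::real. y > 1 + max 1 (1 / \<rho>) \<longrightarrow>
            summable (\<lambda>m. coefc a (m + 2) / y ^ (m + 2)) \<and>
            (y + 1) * Gfun a y - y * Gfun a (y - 1) =
              a 0 - (\<Sum>m. coefc a (m + 2) / y ^ (m + 2)))
       \<and> ((\<lambda>y. (y + 1) * Gfun a y - y * Gfun a (y - 1)) \<longlongrightarrow> a 0) at_top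
       \<and> ((\<lambda>y::real. (y + 1) powr (y + 1) / y powr y - y powr y / (y - 1) powr (y - 1))
            \<longlongrightarrow> exp 1) at_top"
proof -
  have identity: "(\<lambda>m. coefc a (m + 2) / y ^ (m + 2)) sums (a 0 - ((y + 1) * Gfun a y - y * Gfun a (y - 1)))"
    if "y > 1 + max 1 (1 / \<rho>)" for y
  proof (rule sums_coefc_Gfun)
    have "y - 1 > 1 / \<rho>" "y - 1 > 0"
      using that by auto
    then have "\<bar>1 / (y - 1)\<bar> < \<rho>"
      using rho_pos by (simp add: field_simps)
    then show "summable (\<lambda>k. \<bar>a k\<bar> * (1 / (y - 1)) ^ k)"
      using summable_abs_powser_inside[where \<rho> = \<rho> and t = "1 / (y - 1)", OF conv]
        \<open>y - 1 > 0\<close> by simp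
  qed (use that in simp)
  then have "((\<lambda>y. (y + 1) * Gfun a y - y * Gfun a (y - 1)) \<longlongrightarrow> a 0) at_top"
    by (rule tendsto_at_top_if_sums_inverse_powers)
  with identity tendsto_powr_self_difference show ?thesis
    by (auto simp: sums_iff)
qed

end
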